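(* Let $A$ be a finite alphabet, $M$ a finite monoid, $\alpha: A^*\to M$ a monoid morphism, $S=\alpha(A^+)$, and let $B$, $\beta$ and well-formed words be as defined in the context. There exists a map $\eta: A^* \to B^*$ such that: (1) for every $w \in A^*$, $\eta(w)$ is well-formed and $\alpha(w) = \beta(\eta(w))$; (2) for every language $K \subseteq B^*$ definable in $\mathrm{FO}^2(<)$, the language $\eta^{-1}(K) \subseteq A^*$ is definable in $\mathrm{FO}^2(<,+1)$.
   Context: $E(S)$ denotes the set of idempotents of $S$, and $\square$ is a fresh symbol not in $M$. The alphabet $B$ is $\{(e,s,f) \mid e,f \in E(S)\cup\{\square\},\ s \in M\}$. The monoid morphism $\beta: B^* \to M$ is defined on letters by $\beta((e,s,f)) = esf$, $\beta((\square,s,f)) = sf$, $\beta((e,s,\square)) = es$ and $\beta((\square,s,\square)) = s$ for $e,f\in E(S)$, $s \in M$. A word $u = (e_0,s_0,f_0)\cdots(e_n,s_n,f_n) \in B^*$ is well-formed if it is nonempty, $e_0 = f_n = \square$, and for all $i < n$, $f_i = e_{i+1} \in E(S)$. Words are logical structures whose domain is the set of positions, with unary letter predicates $P_a$, the order $<$ and the successor $+1$; $\mathrm{FO}^2(<)$ (resp. $\mathrm{FO}^2(<,+1)$) is the set of first-order formulas using the letter predicates and $<$ (resp. $<$ and $+1$) with only two reusable variable names; a language is definable if it is the set of words satisfying such a sentence. The map $\eta$ need not be a morphism. *)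

theory Defs
  imports Main
begin

datatype fo2var = VX | VY

datatype 'c fo2 =
    Letter 'c fo2var
  | Less fo2var fo2var
  | Succ fo2var fo2var
  | Eq fo2var fo2var
  | Neg "'c fo2"
  | Or "'c fo2" "'c fo2"
  | And "'c fo2" "'c fo2"
  | Exists fo2var "'c fo2"

fun sat :: "'c list \<Rightarrow> (fo2var \<Rightarrow> nat) \<Rightarrow> 'c fo2 \<Rightarrow> bool" where
  "sat w \<sigma> (Letter a x) = (\<sigma> x < length w \<and> w ! (\<sigma> x) = a)"
| "sat w \<sigma> (Less x y) = (\<sigma> x < \<sigma> y)"
| "sat w \<sigma> (Succ x y) = (\<sigma> y = \<sigma> x + 1)"
| "sat w \<sigma> (Eq x y) = (\<sigma> x = \<sigma> y)"
| "sat w \<sigma> (Neg \<phi>) = (\<not> sat w \<sigma> \<phi>)"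
| "sat w \<sigma> (Or \<phi> \<psi>) = (sat w \<sigma> \<phi> \<or> sat w \<sigma> \<psi>)"
| "sat w \<sigma> (And \<phi> \<psi>) = (sat w \<sigma> \<phi> \<and> sat w \<sigma> \<psi>)"
| "sat w \<sigma> (Exists x \<phi>) = (\<exists>i < length w. sat w (\<sigma>(x := i)) \<phi>)"

fun fv :: "'c fo2 \<Rightarrow> fo2var set" where
  "fv (Letter a x) = {x}"
| "fv (Less x y) = {x, y}"
| "fv (Succ x y) = {x, y}"
| "fv (Eq x y) = {x, y}"
| "fv (Neg \<phi>) = fv \<phi>"
| "fv (Or \<phi> \<psi>) = fv \<phi> \<union> fv \<psi>"
| "fv (And \<phi> \<psi>) = fv \<phi> \<union> fv \<psi>"
| "fv (Exists x \<phi>) = fv \<phi> - {x}"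

fun letters :: "'c fo2 \<Rightarrow> 'c set" where
  "letters (Letter a x) = {a}"
| "letters (Less x y) = {}"
| "letters (Succ x y) = {}"
| "letters (Eq x y) = {}"
| "letters (Neg \<phi>) = letters \<phi>"
| "letters (Or \<phi> \<psi>) = letters \<phi> \<union> letters \<psi>"
| "letters (And \<phi> \<psi>) = letters \<phi> \<union> letters \<psi>"
| "letters (Exists x \<phi>) = letters \<phi>"

fun no_succ :: "'c fo2 \<Rightarrow> bool" where
  "no_succ (Succ x y) = False"
| "no_succ (Neg \<phi>) = no_succ \<phi>"
| "no_succ (Or \<phi> \<psi>) = (no_succ \<phi> \<and> no_succ \<psi>)"
| "no_succ (And \<phi> \<psi>) = (no_succ \<phi> \<and> no_succ \<psi>)"
| "no_succ (Exists x \<phi>) = no_succ \<phi>"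
| "no_succ _ = True"

definition sentence :: "'c set \<Rightarrow> 'c fo2 \<Rightarrow> bool" where
  "sentence \<Sigma> \<phi> \<longleftrightarrow> fv \<phi> = {} \<and> letters \<phi> \<subseteq> \<Sigma>"

text \<open>Language over alphabet \<Sigma> defined by a sentence (assignment irrelevant).\<close>
definition lang :: "'c set \<Rightarrow> 'c fo2 \<Rightarrow> 'c list set" where
  "lang \<Sigma> \<phi> = {w \<in> lists \<Sigma>. sat w (\<lambda>_. 0) \<phi>}"

definition FO2_lt_definable :: "'c set \<Rightarrow> 'c list set \<Rightarrow> bool" where
  "FO2_lt_definable \<Sigma> L \<longleftrightarrow> (\<exists>\<phi>. sentence \<Sigma> \<phi> \<and> no_succ \<phi> \<and> L = lang \<Sigma> \<phi>)"

definition FO2_lt_succ_definable :: "'c set \<Rightarrow> 'c list set \<Rightarrow> bool" where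
  "FO2_lt_succ_definable \<Sigma> L \<longleftrightarrow> (\<exists>\<phi>. sentence \<Sigma> \<phi> \<and> L = lang \<Sigma> \<phi>)"

definition monoid_morphism :: "('a list \<Rightarrow> 'm::monoid_mult) \<Rightarrow> bool" where
  "monoid_morphism \<alpha> \<longleftrightarrow> \<alpha> [] = 1 \<and> (\<forall>u v. \<alpha> (u @ v) = \<alpha> u * \<alpha> v)"

definition semigroup_S :: "('a list \<Rightarrow> 'm::monoid_mult) \<Rightarrow> 'm set" where
  "semigroup_S \<alpha> = \<alpha> ` {w. w \<noteq> []}"

definition idempotents :: "'m::monoid_mult set \<Rightarrow> 'm set" where
  "idempotents S = {e \<in> S. e * e = e}"

text \<open>Letters of B are triples (e,s,f); the fresh symbol \<box> is encoded as None.\<close>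
type_synonym 'm bletter = "'m option \<times> 'm \<times> 'm option"

definition Bset :: "('a list \<Rightarrow> 'm::monoid_mult) \<Rightarrow> 'm bletter set" where
  "Bset \<alpha> = {(e, s, f). e \<in> insert None (Some ` idempotents (semigroup_S \<alpha>))
                        \<and> f \<in> insert None (Some ` idempotents (semigroup_S \<alpha>))}"

fun beta_letter :: "'m::monoid_mult bletter \<Rightarrow> 'm" where
  "beta_letter (Some e, s, Some f) = e * s * f"
| "beta_letter (None, s, Some f) = s * f"
| "beta_letter (Some e, s, None) = e * s"
| "beta_letter (None, s, None) = s"

definition beta :: "'m::monoid_mult bletter list \<Rightarrow> 'm" where
  "beta u = prod_list (map beta_letter u)"

definition well_formed :: "('a list \<Rightarrow> 'm::monoid_mult) \<Rightarrow> 'm bletter list \<Rightarrow> bool" where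
  "well_formed \<alpha> u \<longleftrightarrow> u \<noteq> [] \<and> fst (u ! 0) = None \<and> snd (snd (u ! (length u - 1))) = None
     \<and> (\<forall>i < length u - 1. snd (snd (u ! i)) = fst (u ! (i + 1))
            \<and> snd (snd (u ! i)) \<in> Some ` idempotents (semigroup_S \<alpha>))"

end

theory Submission
  imports Defs
begin

text \<open>
  Call a position \<open>b\<close> of \<open>w\<close> a cut if the value of the factor of length \<open>gap = |M| + 1\<close>
  ending at \<open>b\<close> is fixed on the right by an idempotent \<open>e_b\<close> of \<open>S\<close>. Pigeonhole on the
  values \<open>\<alpha>(w[a..j))\<close> puts a cut in every stretch of \<open>gap\<close> positions. Every position
  \<open>k\<close> is attached to the last cut \<open>c \<le> k\<close> (or to the first cut, before it), and the
  letter written at \<open>k\<close> is \<open>(e_c, e_c, e_c)\<close>, except that right before a cut \<open>k + 1\<close>,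
  or at the end, its middle component is \<open>\<alpha>(w[c..k])\<close>, and that the first letter is
  \<open>(\<box>, \<alpha>(w[0..c)), e_c)\<close>. Since \<open>\<alpha>(w[0..c)) e_c = \<alpha>(w[0..c))\<close>,
  the products of these letters telescope to \<open>\<alpha>(w)\<close>.

  The letter at \<open>k\<close> only depends on a window of bounded radius around \<open>k\<close>. Such a
  window is described in FO2(<,+1) by walking along successor edges, alternating the
  two variables, so a sentence over \<open>B\<close> pulls back by replacing every letter predicate
  with the disjunction over the finitely many windows producing that letter; the finitely
  many words shorter than the window are listed separately.
\<close>

section \<open>Fixed offsets in FO2(<,+1)\<close>

fun swap_var :: "fo2var \<Rightarrow> fo2var" where
  "swap_var VX = VY"
| "swap_var VY = VX"

lemma swap_var_neq [simp]: "swap_var z \<noteq> z"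
  by (cases z) auto

fun walk_right :: "fo2var \<Rightarrow> nat \<Rightarrow> (fo2var \<Rightarrow> 'c fo2) \<Rightarrow> 'c fo2" where
  "walk_right z 0 P = P z"
| "walk_right z (Suc k) P =
     Exists (swap_var z) (And (Succ z (swap_var z)) (walk_right (swap_var z) k P))"

fun walk_left :: "fo2var \<Rightarrow> nat \<Rightarrow> (fo2var \<Rightarrow> 'c fo2) \<Rightarrow> 'c fo2" where
  "walk_left z 0 P = P z"
| "walk_left z (Suc k) P =
     Exists (swap_var z) (And (Succ (swap_var z) z) (walk_left (swap_var z) k P))"

lemma sat_walk_right:
  assumes "\<And>\<sigma> v. sat w \<sigma> (P v) = Q (\<sigma> v)" and "\<sigma> z < length w"
  shows "sat w \<sigma> (walk_right z k P) = (\<sigma> z + k < length w \<and> Q (\<sigma> z + k))"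
  using assms(2)
proof (induction k arbitrary: z \<sigma>)
  case 0
  then show ?case by (simp add: assms(1))
next
  case (Suc k)
  have "sat w \<sigma> (walk_right z (Suc k) P)
      = (\<exists>i<length w. i = \<sigma> z + 1 \<and> sat w (\<sigma>(swap_var z := i)) (walk_right (swap_var z) k P))"
    by (auto simp: swap_var_neq[of z, symmetric])
  also have "\<dots> = (\<exists>i<length w. i = \<sigma> z + 1 \<and> i + k < length w \<and> Q (i + k))"
    using Suc.IH by fastforce
  finally show ?case by auto
qed

lemma sat_walk_left:
  assumes "\<And>\<sigma> v. sat w \<sigma> (P v) = Q (\<sigma> v)" and "\<sigma> z < length w"
  shows "sat w \<sigma> (walk_left z k P) = (k \<le> \<sigma> z \<and> Q (\<sigma> z - k))"
  using assms(2)
proof (induction k arbitrary: z \<sigma>)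
  case 0
  then show ?case by (simp add: assms(1))
next
  case (Suc k)
  have "sat w \<sigma> (walk_left z (Suc k) P)
      = (\<exists>i<length w. \<sigma> z = i + 1 \<and> sat w (\<sigma>(swap_var z := i)) (walk_left (swap_var z) k P))"
    by (auto simp: swap_var_neq[of z, symmetric])
  also have "\<dots> = (\<exists>i<length w. \<sigma> z = i + 1 \<and> k \<le> i \<and> Q (i - k))"
    using Suc.IH by fastforce
  finally show ?case
    using Suc.prems by (auto intro!: exI[of _ "\<sigma> z - 1"])
qed

lemma fv_walk_right: "(\<And>v. fv (P v) \<subseteq> {v}) \<Longrightarrow> fv (walk_right z k P) \<subseteq> {z}"
  by (induction k arbitrary: z) fastforce+

lemma fv_walk_left: "(\<And>v. fv (P v) \<subseteq> {v}) \<Longrightarrow> fv (walk_left z k P) \<subseteq> {z}"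
  by (induction k arbitrary: z) fastforce+

definition nth_opt :: "'a list \<Rightarrow> int \<Rightarrow> 'a option" where
  "nth_opt w p = (if 0 \<le> p \<and> p < int (length w) then Some (w ! nat p) else None)"

lemma nth_opt_eq_None_iff: "nth_opt w p = None \<longleftrightarrow> p < 0 \<or> int (length w) \<le> p"
  by (auto simp: nth_opt_def)

definition offset_is :: "fo2var \<Rightarrow> int \<Rightarrow> 'a option \<Rightarrow> 'a fo2" where
  "offset_is z d c = (if 0 \<le> d then
       (case c of None \<Rightarrow> Neg (walk_right z (nat d) (\<lambda>v. Eq v v))
                | Some a \<Rightarrow> walk_right z (nat d) (Letter a))
     else (case c of None \<Rightarrow> Neg (walk_left z (nat (- d)) (\<lambda>v. Eq v v))
                   | Some a \<Rightarrow> walk_left z (nat (- d)) (Letter a)))"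

lemma sat_walk_right_Eq:
  "\<sigma> z < length w \<Longrightarrow> sat w \<sigma> (walk_right z k (\<lambda>v. Eq v v)) = (\<sigma> z + k < length w)"
  using sat_walk_right[where P = "\<lambda>v. Eq v v" and Q = "\<lambda>_. True"] by simp

lemma sat_walk_right_Letter: "\<sigma> z < length w \<Longrightarrow>
    sat w \<sigma> (walk_right z k (Letter a)) = (\<sigma> z + k < length w \<and> w ! (\<sigma> z + k) = a)"
  using sat_walk_right[where P = "Letter a" and Q = "\<lambda>p. p < length w \<and> w ! p = a"] by simp

lemma sat_walk_left_Eq:
  "\<sigma> z < length w \<Longrightarrow> sat w \<sigma> (walk_left z k (\<lambda>v. Eq v v)) = (k \<le> \<sigma> z)"
  using sat_walk_left[where P = "\<lambda>v. Eq v v" and Q = "\<lambda>_. True"] by simp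

lemma sat_walk_left_Letter: "\<sigma> z < length w \<Longrightarrow>
    sat w \<sigma> (walk_left z k (Letter a)) = (k \<le> \<sigma> z \<and> w ! (\<sigma> z - k) = a)"
  using sat_walk_left[where P = "Letter a" and Q = "\<lambda>p. p < length w \<and> w ! p = a"] by force

lemma sat_offset_is:
  assumes "\<sigma> z < length w"
  shows "sat w \<sigma> (offset_is z d c) = (nth_opt w (int (\<sigma> z) + d) = c)"
proof (cases "0 \<le> d")
  case True
  then show ?thesis
    using assms by (cases c) (auto simp: offset_is_def nth_opt_def nat_add_distrib
        sat_walk_right_Eq sat_walk_right_Letter)
next
  case False
  have "nat (int (\<sigma> z) + d) = \<sigma> z - nat (- d)" if "0 \<le> int (\<sigma> z) + d"
    using that False by linarith
  then show ?thesis
    using assms False by (cases c) (auto simp: offset_is_def nth_opt_def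
        sat_walk_left_Eq sat_walk_left_Letter)
qed

lemma fv_offset_is: "fv (offset_is z d c) \<subseteq> {z}"
  by (auto simp: offset_is_def split: option.splits
      dest!: subsetD[OF fv_walk_right, rotated] subsetD[OF fv_walk_left, rotated])

lemma sat_foldr_And: "sat w \<sigma> (foldr And \<phi>s \<psi>) = ((\<forall>\<phi>\<in>set \<phi>s. sat w \<sigma> \<phi>) \<and> sat w \<sigma> \<psi>)"
  by (induction \<phi>s) auto

lemma sat_foldr_Or: "sat w \<sigma> (foldr Or \<phi>s \<psi>) = ((\<exists>\<phi>\<in>set \<phi>s. sat w \<sigma> \<phi>) \<or> sat w \<sigma> \<psi>)"
  by (induction \<phi>s) auto

lemma fv_foldr_And: "fv (foldr And \<phi>s \<psi>) = \<Union> (fv ` set \<phi>s) \<union> fv \<psi>"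
  by (induction \<phi>s) auto

lemma fv_foldr_Or: "fv (foldr Or \<phi>s \<psi>) = \<Union> (fv ` set \<phi>s) \<union> fv \<psi>"
  by (induction \<phi>s) auto

fun subst_letters :: "('c \<Rightarrow> fo2var \<Rightarrow> 'a fo2) \<Rightarrow> 'c fo2 \<Rightarrow> 'a fo2" where
  "subst_letters L (Letter c x) = L c x"
| "subst_letters L (Less x y) = Less x y"
| "subst_letters L (Succ x y) = Succ x y"
| "subst_letters L (Eq x y) = Eq x y"
| "subst_letters L (Neg \<phi>) = Neg (subst_letters L \<phi>)"
| "subst_letters L (Or \<phi> \<psi>) = Or (subst_letters L \<phi>) (subst_letters L \<psi>)"
| "subst_letters L (And \<phi> \<psi>) = And (subst_letters L \<phi>) (subst_letters L \<psi>)"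
| "subst_letters L (Exists x \<phi>) = Exists x (subst_letters L \<phi>)"

lemma fv_subst_letters: "(\<And>c x. fv (L c x) \<subseteq> {x}) \<Longrightarrow> fv (subst_letters L \<phi>) \<subseteq> fv \<phi>"
  by (induction \<phi>) auto

lemma sat_subst_letters:
  assumes "length u = length w"
    and "\<And>c x \<sigma>. \<sigma> x < length w \<Longrightarrow> sat w \<sigma> (L c x) = (u ! \<sigma> x = c)"
    and "\<forall>x\<in>fv \<phi>. \<sigma> x < length w"
  shows "sat w \<sigma> (subst_letters L \<phi>) = sat u \<sigma> \<phi>"
  using assms(3)
proof (induction \<phi> arbitrary: \<sigma>)
  case (Exists x \<phi>)
  have "sat w (\<sigma>(x := i)) (subst_letters L \<phi>) = sat u (\<sigma>(x := i)) \<phi>" if "i < length w" for i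
    using Exists.prems that by (intro Exists.IH) auto
  then show ?case using assms(1) by auto
qed (use assms(1,2) in auto)

lemma list_eq_iff_nth_opt:
  "w = u \<longleftrightarrow> (\<forall>k<length u. nth_opt w (int k) = Some (u ! k)) \<and> nth_opt w (int (length u)) = None"
proof
  assume *: "(\<forall>k<length u. nth_opt w (int k) = Some (u ! k)) \<and> nth_opt w (int (length u)) = None"
  then have "length w = length u"
    by (cases "length u") (auto simp: nth_opt_def split: if_splits)
  with * show "w = u"
    by (auto simp: nth_opt_def list_eq_iff_nth_eq)
qed (simp add: nth_opt_def)

text \<open>The word is pinned down from its first position: nothing at offset -1 and
  nothing at offset \<open>length u\<close>.\<close>

definition word_formula :: "'a list \<Rightarrow> 'a fo2" where
  "word_formula u = (if u = [] then Neg (Exists VX (Eq VX VX)) else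
     Exists VX (foldr And (offset_is VX (- 1) None # offset_is VX (int (length u)) None #
        map (\<lambda>k. offset_is VX (int k) (Some (u ! k))) [0..<length u]) (Eq VX VX)))"

lemma fv_word_formula: "fv (word_formula u) = {}"
  using fv_offset_is[of VX] by (auto simp: word_formula_def fv_foldr_And)

lemma sat_word_formula: "sat w \<sigma> (word_formula u) = (w = u)"
proof (cases "u = []")
  case False
  have "sat w \<sigma> (word_formula u) = (\<exists>i<length w. nth_opt w (int i - 1) = None
      \<and> nth_opt w (int i + int (length u)) = None
      \<and> (\<forall>k<length u. nth_opt w (int i + int k) = Some (u ! k)))"
    using False by (auto simp: word_formula_def sat_foldr_And sat_offset_is)
  also have "\<dots> = (nth_opt w (int (length u)) = None
      \<and> (\<forall>k<length u. nth_opt w (int k) = Some (u ! k)))"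
    using False by (auto simp: nth_opt_eq_None_iff nth_opt_def intro!: exI[of _ 0])
  also have "\<dots> = (w = u)"
    using False by (auto simp: list_eq_iff_nth_opt)
  finally show ?thesis .
qed (auto simp: word_formula_def)

definition length_gt :: "nat \<Rightarrow> 'a fo2" where
  "length_gt m = Exists VX (walk_right VX m (\<lambda>v. Eq v v))"

lemma sat_length_gt: "sat w \<sigma> (length_gt m) = (m < length w)"
proof -
  have "sat w \<sigma> (length_gt m) = (\<exists>i<length w. i + m < length w)"
    using sat_walk_right_Eq[of "\<sigma>(VX := i)" VX w m for i] by (auto simp: length_gt_def)
  then show ?thesis
    by (auto intro!: exI[of _ 0])
qed

lemma fv_length_gt: "fv (length_gt m) = {}"
  using fv_walk_right[of "\<lambda>v. Eq v v" VX m] by (auto simp: length_gt_def)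

section \<open>Preimages under local maps\<close>

definition neighbourhood :: "nat \<Rightarrow> 'a list \<Rightarrow> nat \<Rightarrow> 'a option list" where
  "neighbourhood D w i = map (\<lambda>k. nth_opt w (int i + int k - int D)) [0..<2 * D + 1]"

definition neighbourhood_formula :: "nat \<Rightarrow> fo2var \<Rightarrow> 'a option list \<Rightarrow> 'a fo2" where
  "neighbourhood_formula D z v =
     foldr And (map (\<lambda>k. offset_is z (int k - int D) (v ! k)) [0..<2 * D + 1]) (Eq z z)"

lemma length_neighbourhood [simp]: "length (neighbourhood D w i) = 2 * D + 1"
  by (simp add: neighbourhood_def)

lemma nth_opt_eq_if_neighbourhood_eq:
  assumes "neighbourhood D w i = neighbourhood D w' i'" and "- int D \<le> d" and "d \<le> int D"
  shows "nth_opt w (int i + d) = nth_opt w' (int i' + d)"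
proof -
  have "nat (d + int D) < 2 * D + 1"
    using assms(2,3) by linarith
  then show ?thesis
    using arg_cong[OF assms(1), of "\<lambda>v. v ! nat (d + int D)"] assms(2)
    by (simp del: upt_Suc add: neighbourhood_def)
qed

lemma sat_neighbourhood_formula:
  assumes "\<sigma> z < length w" and "length v = 2 * D + 1"
  shows "sat w \<sigma> (neighbourhood_formula D z v) = (neighbourhood D w (\<sigma> z) = v)"
proof -
  have "sat w \<sigma> (neighbourhood_formula D z v)
      = (\<forall>k<2 * D + 1. nth_opt w (int (\<sigma> z) + (int k - int D)) = v ! k)"
    using assms(1)
    by (auto simp del: upt_Suc simp: neighbourhood_formula_def sat_foldr_And sat_offset_is)
  also have "\<dots> = (neighbourhood D w (\<sigma> z) = v)"
    using assms(2)
    by (auto simp del: upt_Suc simp: neighbourhood_def list_eq_iff_nth_eq add_diff_eq)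
  finally show ?thesis .
qed

lemma fv_neighbourhood_formula: "fv (neighbourhood_formula D z v) \<subseteq> {z}"
  using fv_offset_is[of z] by (auto simp del: upt_Suc simp: neighbourhood_formula_def fv_foldr_And)

definition local_map :: "nat \<Rightarrow> nat \<Rightarrow> ('a list \<Rightarrow> 'c list) \<Rightarrow> bool" where
  "local_map N D \<eta> \<longleftrightarrow> (\<forall>w. N \<le> length w \<longrightarrow> length (\<eta> w) = length w)
     \<and> (\<forall>w w' i i'. N \<le> length w \<longrightarrow> N \<le> length w' \<longrightarrow> i < length w \<longrightarrow> i' < length w'
          \<longrightarrow> neighbourhood D w i = neighbourhood D w' i' \<longrightarrow> \<eta> w ! i = \<eta> w' ! i')"

lemma local_map_letter_formulas:
  fixes \<eta> :: "'a::finite list \<Rightarrow> 'c list"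
  assumes "local_map N D \<eta>"
  obtains L :: "'c \<Rightarrow> fo2var \<Rightarrow> 'a fo2" where
    "\<And>c z. fv (L c z) \<subseteq> {z}"
    "\<And>c z w \<sigma>. N \<le> length w \<Longrightarrow> \<sigma> z < length w \<Longrightarrow> sat w \<sigma> (L c z) = (\<eta> w ! \<sigma> z = c)"
proof -
  define Nbhs where "Nbhs c = {v. length v = 2 * D + 1 \<and> (\<exists>w i. N \<le> length w \<and> i < length w
      \<and> neighbourhood D w i = v \<and> \<eta> w ! i = c)}" for c
  have "finite (Nbhs c)" for c
    by (rule finite_subset[OF _ finite_lists_length_eq[of UNIV "2 * D + 1"]]) (auto simp: Nbhs_def)
  then have "\<forall>c. \<exists>vs. set vs = Nbhs c"
    using finite_list by auto
  then obtain vs where vs: "\<forall>c. set (vs c) = Nbhs c"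
    using choice[of "\<lambda>c vs. set vs = Nbhs c"] by auto
  define L where "L c z = foldr Or (map (neighbourhood_formula D z) (vs c)) (Neg (Eq z z))" for c z
  show thesis
  proof
    show "fv (L c z) \<subseteq> {z}" for c z
      using fv_neighbourhood_formula[of D z] by (auto simp: L_def fv_foldr_Or)
    fix c :: 'c and z :: fo2var and w :: "'a list" and \<sigma>
    assume long: "N \<le> length w" and z: "\<sigma> z < length w"
    have "sat w \<sigma> (L c z) = (neighbourhood D w (\<sigma> z) \<in> Nbhs c)"
      using z by (auto simp: L_def sat_foldr_Or vs Nbhs_def sat_neighbourhood_formula)
    also have "\<dots> = (\<eta> w ! \<sigma> z = c)"
    proof
      assume "neighbourhood D w (\<sigma> z) \<in> Nbhs c"
      then obtain w' i' where "N \<le> length w'" "i' < length w'"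
          "neighbourhood D w' i' = neighbourhood D w (\<sigma> z)" "\<eta> w' ! i' = c"
        unfolding Nbhs_def by blast
      with assms long z show "\<eta> w ! \<sigma> z = c"
        unfolding local_map_def by metis
    next
      assume "\<eta> w ! \<sigma> z = c"
      with long z show "neighbourhood D w (\<sigma> z) \<in> Nbhs c"
        unfolding Nbhs_def by auto
    qed
    finally show "sat w \<sigma> (L c z) = (\<eta> w ! \<sigma> z = c)" .
  qed
qed

lemma FO2_lt_succ_definable_preimage_local_map:
  fixes \<eta> :: "'a::finite list \<Rightarrow> 'c list"
  assumes \<eta>: "local_map N D \<eta>"
    and into: "\<And>w. N \<le> length w \<Longrightarrow> \<eta> w \<in> lists \<Sigma>"
    and K: "FO2_lt_succ_definable \<Sigma> K"
  shows "FO2_lt_succ_definable UNIV {w. \<eta> w \<in> K}"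
proof -
  obtain \<phi> where \<phi>: "sentence \<Sigma> \<phi>" "K = lang \<Sigma> \<phi>"
    using K by (auto simp: FO2_lt_succ_definable_def)
  obtain L where L: "\<And>c z. fv (L c z) \<subseteq> {z}"
    "\<And>c z w \<sigma>. N \<le> length w \<Longrightarrow> \<sigma> z < length w \<Longrightarrow> sat w \<sigma> (L c z) = (\<eta> w ! \<sigma> z = c)"
    using local_map_letter_formulas[OF \<eta>] by blast
  have "finite {w :: 'a list. length w \<le> N \<and> \<eta> w \<in> K}"
    by (rule finite_subset[OF _ finite_lists_length_le[of UNIV N]]) auto
  then obtain short where short: "set short = {w. length w \<le> N \<and> \<eta> w \<in> K}"
    using finite_list by blast
  define \<psi> where "\<psi> = Or (foldr Or (map word_formula short) (Exists VX (Neg (Eq VX VX))))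
                          (And (length_gt N) (subst_letters L \<phi>))"
  have fv_\<phi>: "fv \<phi> = {}"
    using \<phi>(1) by (simp add: sentence_def)
  have "fv (subst_letters L \<phi>) = {}"
    using fv_subst_letters[of L \<phi>] L(1) fv_\<phi> by blast
  then have "sentence UNIV \<psi>"
    by (auto simp: sentence_def \<psi>_def fv_foldr_Or fv_word_formula fv_length_gt)
  moreover have "sat w (\<lambda>_. 0) \<psi> \<longleftrightarrow> \<eta> w \<in> K" for w
  proof (cases "N < length w")
    case True
    have "sat w (\<lambda>_. 0) (subst_letters L \<phi>) = sat (\<eta> w) (\<lambda>_. 0) \<phi>"
      using True \<eta> fv_\<phi> by (intro sat_subst_letters) (auto simp: local_map_def L(2))
    then show ?thesis
      using True into[of w] short
      by (auto simp: \<psi>_def \<phi>(2) lang_def sat_foldr_Or sat_word_formula sat_length_gt)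
  next
    case False
    then show ?thesis
      using short by (auto simp: \<psi>_def sat_foldr_Or sat_word_formula sat_length_gt)
  qed
  ultimately show ?thesis
    unfolding FO2_lt_succ_definable_def lang_def by auto
qed

section \<open>Cuts\<close>

lemma finite_monoid_idempotent_power:
  fixes t :: "'m::{monoid_mult, finite}"
  obtains k where "1 \<le> k" and "t ^ k * t ^ k = t ^ k"
proof -
  let ?J = "{1..card (UNIV :: 'm set) + 1}"
  have "\<not> inj_on (\<lambda>k. t ^ k) ?J"
  proof
    assume "inj_on (\<lambda>k. t ^ k) ?J"
    then have "card ?J \<le> card (UNIV :: 'm set)"
      by (rule card_inj_on_le) auto
    then show False by simp
  qed
  then obtain i j where ij: "i \<in> ?J" "i < j" "t ^ i = t ^ j"
    unfolding inj_on_def by (metis linorder_neqE_nat)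
  define p where "p = j - i"
  have "t ^ (x + p) = t ^ x" if "i \<le> x" for x
  proof -
    have "t ^ (x + p) = t ^ (x - i) * t ^ j"
      using that ij(2) by (simp add: p_def power_add[symmetric])
    also have "\<dots> = t ^ x"
      using that by (simp add: ij(3)[symmetric] power_add[symmetric])
    finally show ?thesis .
  qed
  then have "t ^ (i * p + c * p) = t ^ (i * p)" for c
  proof (induction c)
    case (Suc c)
    have "1 \<le> p"
      using ij(2) by (simp add: p_def)
    then have "i \<le> i * p + c * p"
      by (metis le_add1 mult_le_mono2 mult_1_right order_trans)
    then show ?case
      using Suc by (metis add.assoc mult_Suc add.commute)
  qed simp
  then have "t ^ (i * p) * t ^ (i * p) = t ^ (i * p)"
    by (simp add: power_add[symmetric])
  moreover have "1 \<le> i * p"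
    using ij by (simp add: p_def)
  ultimately show thesis
    using that by blast
qed

definition first_within :: "nat \<Rightarrow> (nat \<Rightarrow> bool) \<Rightarrow> nat" where
  "first_within n P = (if \<exists>k<n. P k then LEAST k. k < n \<and> P k else 0)"

lemma first_within_less: "0 < n \<Longrightarrow> first_within n P < n"
proof (cases "\<exists>k<n. P k")
  case True
  then obtain k where "k < n \<and> P k"
    by blast
  then show ?thesis
    using LeastI[of "\<lambda>k. k < n \<and> P k" k] by (simp add: first_within_def)
qed (auto simp: first_within_def)

lemma first_within_cong: "(\<And>k. k < n \<Longrightarrow> P k = Q k) \<Longrightarrow> first_within n P = first_within n Q"
proof -
  assume "\<And>k. k < n \<Longrightarrow> P k = Q k"
  then have "(\<lambda>k. k < n \<and> P k) = (\<lambda>k. k < n \<and> Q k)"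
    by auto
  then show ?thesis
    unfolding first_within_def by metis
qed

lemma first_within_eqI:
  assumes "j < n" "P j" "\<And>k. k < j \<Longrightarrow> \<not> P k"
  shows "first_within n P = j"
proof -
  have "(LEAST k. k < n \<and> P k) = j"
    by (rule Least_equality) (use assms not_le in blast)+
  then show ?thesis
    using assms(1,2) by (auto simp: first_within_def)
qed

locale morphism_to_finite_monoid =
  fixes \<alpha> :: "'a list \<Rightarrow> 'm::{monoid_mult, finite}"
  assumes morphism: "monoid_morphism \<alpha>"
begin

lemma alpha_append: "\<alpha> (u @ v) = \<alpha> u * \<alpha> v"
  using morphism by (simp add: monoid_morphism_def)

definition idems :: "'m set" where
  "idems = idempotents (semigroup_S \<alpha>)"

lemma idems_idem: "e \<in> idems \<Longrightarrow> e * e = e"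
  by (simp add: idems_def idempotents_def)

lemma right_stabilizing_idempotent:
  assumes "x * s = x" and "s \<in> semigroup_S \<alpha>"
  shows "\<exists>e\<in>idems. x * e = x"
proof -
  obtain u where u: "u \<noteq> []" "s = \<alpha> u"
    using assms(2) by (auto simp: semigroup_S_def)
  obtain k where k: "1 \<le> k" "s ^ k * s ^ k = s ^ k"
    using finite_monoid_idempotent_power by blast
  have "\<alpha> (concat (replicate n u)) = s ^ n" for n
    using morphism u(2) by (induction n) (simp_all add: alpha_append monoid_morphism_def)
  moreover have "concat (replicate k u) \<noteq> []"
    using k(1) u(1) by (cases k) auto
  ultimately have "s ^ k \<in> semigroup_S \<alpha>"
    unfolding semigroup_S_def by (metis (mono_tags) image_eqI mem_Collect_eq)
  with k(2) have "s ^ k \<in> idems"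
    by (simp add: idems_def idempotents_def)
  moreover have "x * s ^ n = x" for n
    using assms(1) by (induction n) (simp_all add: power_Suc2 mult.assoc[symmetric])
  ultimately show ?thesis
    by blast
qed

definition stabilizer :: "'m \<Rightarrow> 'm" where
  "stabilizer x = (SOME e. e \<in> idems \<and> x * e = x)"

lemma stabilizer: "\<exists>e\<in>idems. x * e = x \<Longrightarrow> stabilizer x \<in> idems \<and> x * stabilizer x = x"
  unfolding stabilizer_def by (rule someI_ex) blast

text \<open>A cut needs \<open>gap\<close> letters to its left. As every stretch of \<open>gap\<close> positions
  contains a cut, each position of a long word finds its cut within distance \<open>reach\<close>,
  and its letter is determined within distance \<open>radius\<close>.\<close>

definition gap :: nat where
  "gap = card (UNIV :: 'm set) + 1"

definition reach :: nat where
  "reach = 2 * gap"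

definition radius :: nat where
  "radius = reach + gap"

lemma gap_pos: "0 < gap"
  by (simp add: gap_def)

text \<open>The letters of \<open>\<eta>(w)\<close> are computed on words seen as partial maps \<open>r\<close> from integer
  positions to letters (\<open>None\<close> outside the word), so that shifting the origin is just
  composition with a translation.\<close>

definition factor_value :: "(int \<Rightarrow> 'a option) \<Rightarrow> int \<Rightarrow> int \<Rightarrow> 'm" where
  "factor_value r p q = \<alpha> (map (\<lambda>k. the (r (p + int k))) [0..<nat (q - p)])"

definition is_cut :: "(int \<Rightarrow> 'a option) \<Rightarrow> int \<Rightarrow> bool" where
  "is_cut r b \<longleftrightarrow> r (b - int gap) \<noteq> None \<and> r b \<noteq> None
     \<and> (\<exists>e\<in>idems. factor_value r (b - int gap) b * e = factor_value r (b - int gap) b)"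

definition cut_idem :: "(int \<Rightarrow> 'a option) \<Rightarrow> int \<Rightarrow> 'm" where
  "cut_idem r b = stabilizer (factor_value r (b - int gap) b)"

definition has_cut_before :: "(int \<Rightarrow> 'a option) \<Rightarrow> int \<Rightarrow> bool" where
  "has_cut_before r b \<longleftrightarrow> (\<exists>k<reach. is_cut r (b - int k))"

text \<open>The cut a position is attached to: the nearest one at or before it, or else the
  next one. Both searches are bounded by \<open>reach\<close>, which keeps the letter computable
  from a bounded window.\<close>

definition anchor :: "(int \<Rightarrow> 'a option) \<Rightarrow> int \<Rightarrow> int" where
  "anchor r b = (if has_cut_before r b then b - int (first_within reach (\<lambda>k. is_cut r (b - int k)))
                 else b + 1 + int (first_within reach (\<lambda>k. is_cut r (b + 1 + int k))))"

definition link :: "(int \<Rightarrow> 'a option) \<Rightarrow> int \<Rightarrow> 'm" where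
  "link r b = cut_idem r (anchor r b)"

definition middle :: "(int \<Rightarrow> 'a option) \<Rightarrow> int \<Rightarrow> 'm" where
  "middle r i = (if \<not> has_cut_before r i then
                   (if r (i - 1) \<noteq> None then link r i else factor_value r i (anchor r i))
                 else if is_cut r (i + 1) \<or> r (i + 1) = None
                 then factor_value r (anchor r i) (i + 1)
                 else link r i)"

definition letter_at :: "(int \<Rightarrow> 'a option) \<Rightarrow> int \<Rightarrow> 'm bletter" where
  "letter_at r i = (if r (i - 1) = None then None else Some (link r i), middle r i,
                    if r (i + 1) = None then None else Some (link r (i + 1)))"

lemma factor_value_shift: "factor_value (\<lambda>d. r (t + d)) p q = factor_value r (t + p) (t + q)"
  by (simp add: factor_value_def add.assoc)

lemma is_cut_shift: "is_cut (\<lambda>d. r (t + d)) b = is_cut r (t + b)"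
  by (simp add: is_cut_def factor_value_shift add_diff_eq)

lemma cut_idem_shift: "cut_idem (\<lambda>d. r (t + d)) b = cut_idem r (t + b)"
  by (simp add: cut_idem_def factor_value_shift add_diff_eq)

lemma has_cut_before_shift: "has_cut_before (\<lambda>d. r (t + d)) b = has_cut_before r (t + b)"
  by (simp add: has_cut_before_def is_cut_shift add_diff_eq)

lemma anchor_shift: "anchor (\<lambda>d. r (t + d)) b = anchor r (t + b) - t"
  by (simp add: anchor_def has_cut_before_shift is_cut_shift add_diff_eq add.assoc)

lemma link_shift: "link (\<lambda>d. r (t + d)) b = link r (t + b)"
  by (simp add: link_def anchor_shift cut_idem_shift)

lemma letter_at_shift: "letter_at (\<lambda>d. r (t + d)) b = letter_at r (t + b)"
  by (simp add: letter_at_def middle_def link_shift has_cut_before_shift anchor_shift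
      factor_value_shift is_cut_shift add.assoc add_diff_eq)

lemma factor_value_cong: "\<forall>d\<in>{p..<q}. r d = r' d \<Longrightarrow> factor_value r p q = factor_value r' p q"
  by (auto simp: factor_value_def intro!: arg_cong[where f = \<alpha>])

lemma is_cut_cong: "\<forall>d\<in>{b - int gap..b}. r d = r' d \<Longrightarrow> is_cut r b = is_cut r' b"
  using factor_value_cong[of "b - int gap" b r r'] by (simp add: is_cut_def)

lemma cut_idem_cong: "\<forall>d\<in>{b - int gap..b}. r d = r' d \<Longrightarrow> cut_idem r b = cut_idem r' b"
  using factor_value_cong[of "b - int gap" b r r'] by (simp add: cut_idem_def)

lemma anchor_bounds: "b - int reach < anchor r b \<and> anchor r b \<le> b + int reach"
proof -
  have "int (first_within reach P) < int reach" for P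
    using first_within_less[of reach P] gap_pos by (simp add: reach_def)
  from this[of "\<lambda>k. is_cut r (b - int k)"] this[of "\<lambda>k. is_cut r (b + 1 + int k)"] show ?thesis
    by (simp add: anchor_def)
qed

lemma anchor_cong:
  assumes "\<forall>d\<in>{b - int reach - int gap..b + int reach}. r d = r' d"
  shows "has_cut_before r b = has_cut_before r' b \<and> anchor r b = anchor r' b"
proof -
  have cut: "is_cut r c = is_cut r' c" if "b - int reach < c" "c \<le> b + int reach" for c
    using assms that by (intro is_cut_cong) auto
  have before: "is_cut r (b - int k) = is_cut r' (b - int k)" if "k < reach" for k
    using that by (auto intro!: cut)
  have after: "is_cut r (b + 1 + int k) = is_cut r' (b + 1 + int k)" if "k < reach" for k
    using that by (auto intro!: cut)
  have "has_cut_before r b = has_cut_before r' b"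
    using before by (auto simp: has_cut_before_def)
  moreover have
    "first_within reach (\<lambda>k. is_cut r (b - int k)) = first_within reach (\<lambda>k. is_cut r' (b - int k))"
    "first_within reach (\<lambda>k. is_cut r (b + 1 + int k)) =
       first_within reach (\<lambda>k. is_cut r' (b + 1 + int k))"
    using before after by (auto intro!: first_within_cong)
  ultimately show ?thesis
    by (simp add: anchor_def)
qed

lemma link_cong:
  assumes "\<forall>d\<in>{b - int reach - int gap..b + int reach}. r d = r' d"
  shows "link r b = link r' b"
  using anchor_cong[OF assms] anchor_bounds[of b r] assms
  by (auto simp: link_def intro!: cut_idem_cong)

lemma middle_cong:
  assumes "\<forall>d\<in>{b - int reach - int gap..b + int reach}. r d = r' d"
  shows "middle r b = middle r' b"
proof -
  have "2 \<le> reach"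
    using gap_pos by (simp add: reach_def)
  then have "r (b - 1) = r' (b - 1)" "r (b + 1) = r' (b + 1)" "is_cut r (b + 1) = is_cut r' (b + 1)"
    using assms by (auto intro!: is_cut_cong)
  moreover have "factor_value r b (anchor r b) = factor_value r' b (anchor r b)"
    "factor_value r (anchor r b) (b + 1) = factor_value r' (anchor r b) (b + 1)"
    using anchor_bounds[of b r] assms by (auto intro!: factor_value_cong)
  ultimately show ?thesis
    using anchor_cong[OF assms] link_cong[OF assms] by (simp add: middle_def)
qed

lemma letter_at_local:
  assumes "\<forall>d\<in>{- int radius..int radius}. r (i + d) = r' (i' + d)"
  shows "letter_at r i = letter_at r' i'"
proof -
  let ?s = "\<lambda>d. r (i + d)" and ?s' = "\<lambda>d. r' (i' + d)"
  have window: "\<forall>d\<in>{b - int reach - int gap..b + int reach}. ?s d = ?s' d" if "b \<in> {0, 1}" for b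
    using assms that gap_pos by (auto simp: radius_def)
  have "- 1 \<in> {- int radius..int radius}" "1 \<in> {- int radius..int radius}"
    using gap_pos by (auto simp: radius_def)
  then have "?s (- 1) = ?s' (- 1)" "?s 1 = ?s' 1"
    using assms by blast+
  moreover have "link ?s 0 = link ?s' 0" "link ?s 1 = link ?s' 1" "middle ?s 0 = middle ?s' 0"
    using link_cong[where r = ?s and r' = ?s', OF window]
      middle_cong[where r = ?s and r' = ?s', OF window]
    by simp_all
  ultimately have "letter_at ?s 0 = letter_at ?s' 0"
    unfolding letter_at_def by simp
  then show ?thesis
    by (simp add: letter_at_shift)
qed

section \<open>The letters on an actual word\<close>

lemma factor_value_split:
  assumes "p \<le> m" and "m \<le> q"
  shows "factor_value r p q = factor_value r p m * factor_value r m q"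
proof -
  define f where "f p k = the (r (p + int k))" for p k
  define a b where "a = nat (m - p)" and "b = nat (q - m)"
  have "map (f p) [0..<a + b] = map (f p) [0..<a] @ map (f m) [0..<b]"
    using assms by (intro nth_equalityI) (auto simp: nth_append f_def a_def add.commute)
  moreover have "nat (q - p) = a + b"
    using assms by (simp add: a_def b_def)
  ultimately show ?thesis
    by (simp add: factor_value_def alpha_append f_def[symmetric] a_def b_def)
qed

lemma factor_value_in_semigroup_S: "p < q \<Longrightarrow> factor_value r p q \<in> semigroup_S \<alpha>"
  by (auto simp: factor_value_def semigroup_S_def)

context
  fixes w :: "'a list"
begin

abbreviation infix_value :: "nat \<Rightarrow> nat \<Rightarrow> 'm" where
  "infix_value a b \<equiv> factor_value (nth_opt w) (int a) (int b)"

lemma infix_value_all: "infix_value 0 (length w) = \<alpha> w"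
proof -
  have "map (\<lambda>k. the (nth_opt w (int k))) [0..<length w] = map (nth w) [0..<length w]"
    by (rule map_cong) (auto simp: nth_opt_def)
  then show ?thesis
    by (simp add: factor_value_def map_nth)
qed

definition cut_pos :: "nat \<Rightarrow> bool" where
  "cut_pos b \<longleftrightarrow> is_cut (nth_opt w) (int b)"

definition idem_at :: "nat \<Rightarrow> 'm" where
  "idem_at b = cut_idem (nth_opt w) (int b)"

lemma cut_pos_iff: "cut_pos b \<longleftrightarrow> gap \<le> b \<and> b < length w
    \<and> (\<exists>e\<in>idems. infix_value (b - gap) b * e = infix_value (b - gap) b)"
  by (cases "gap \<le> b") (auto simp: cut_pos_def is_cut_def nth_opt_def of_nat_diff)

lemma is_cut_nth_opt: "is_cut (nth_opt w) p \<longleftrightarrow> 0 \<le> p \<and> cut_pos (nat p)"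
  by (cases "0 \<le> p") (auto simp: cut_pos_def is_cut_def nth_opt_def)

lemma cut_pos_idem_at:
  assumes "cut_pos b"
  shows "idem_at b \<in> idems" and "infix_value 0 b * idem_at b = infix_value 0 b"
proof -
  have b: "gap \<le> b"
    using assms by (simp add: cut_pos_iff)
  let ?x = "infix_value (b - gap) b"
  have "\<exists>e\<in>idems. ?x * e = ?x"
    using assms unfolding cut_pos_iff by blast
  moreover have "idem_at b = stabilizer ?x"
    using b by (simp add: idem_at_def cut_idem_def of_nat_diff)
  ultimately have st: "idem_at b \<in> idems" "?x * idem_at b = ?x"
    using stabilizer by simp_all
  then show "idem_at b \<in> idems"
    by simp
  have "infix_value 0 b = infix_value 0 (b - gap) * ?x"
    using b by (intro factor_value_split) auto
  with st show "infix_value 0 b * idem_at b = infix_value 0 b"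
    by (simp add: mult.assoc)
qed

text \<open>Two of the prefix values \<open>\<alpha>(w[a..j))\<close>, \<open>a < j \<le> a + gap\<close>, coincide, say for
  \<open>j < j'\<close>; then \<open>w[j..j')\<close> stabilizes \<open>\<alpha>(w[a..j))\<close>, hence so does an idempotent power
  of it, and \<open>j\<close> is a cut.\<close>

lemma cut_pos_within_gap:
  assumes "gap \<le> a" and "a + gap \<le> length w"
  shows "\<exists>b. a < b \<and> b \<le> a + gap \<and> cut_pos b"
proof -
  let ?J = "{a + 1..a + gap}"
  have "\<not> inj_on (infix_value a) ?J"
  proof
    assume "inj_on (infix_value a) ?J"
    then have "card ?J \<le> card (UNIV :: 'm set)"
      by (rule card_inj_on_le) auto
    then show False
      by (simp add: gap_def)
  qed
  then obtain j j' where j: "j \<in> ?J" "j' \<in> ?J" "j < j'" "infix_value a j = infix_value a j'"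
    unfolding inj_on_def by (metis linorder_neqE_nat)
  have "infix_value a j' = infix_value a j * infix_value j j'"
    using j by (intro factor_value_split) auto
  then have "infix_value a j * infix_value j j' = infix_value a j"
    using j(4) by metis
  moreover have "infix_value j j' \<in> semigroup_S \<alpha>"
    using j(3) by (intro factor_value_in_semigroup_S) simp
  ultimately obtain e where e: "e \<in> idems" "infix_value a j * e = infix_value a j"
    using right_stabilizing_idempotent by blast
  have "infix_value (j - gap) j = infix_value (j - gap) a * infix_value a j"
    using j by (intro factor_value_split) auto
  then have "infix_value (j - gap) j * e = infix_value (j - gap) j"
    using e by (simp add: mult.assoc)
  then have "cut_pos j"
    using j assms e by (auto simp: cut_pos_iff)
  then show ?thesis
    using j by (intro exI[of _ j]) auto
qed

context
  assumes long: "reach \<le> length w"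
begin

definition first_cut :: nat where
  "first_cut = (LEAST b. cut_pos b)"

lemma first_cut: "cut_pos first_cut" "first_cut \<le> reach" "c < first_cut \<Longrightarrow> \<not> cut_pos c"
proof -
  obtain b where "b \<le> gap + gap" "cut_pos b"
    using cut_pos_within_gap[of gap] long by (auto simp: reach_def)
  then have b: "b \<le> reach" "cut_pos b"
    by (simp_all add: reach_def)
  show "cut_pos first_cut"
    unfolding first_cut_def by (rule LeastI[where P = cut_pos, OF b(2)])
  show "first_cut \<le> reach"
    using Least_le[of cut_pos b] b by (simp add: first_cut_def)
  show "c < first_cut \<Longrightarrow> \<not> cut_pos c"
    unfolding first_cut_def by (rule not_less_Least)
qed

definition last_cut :: "nat \<Rightarrow> nat" where
  "last_cut k = (GREATEST c. cut_pos c \<and> c \<le> k)"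

lemma last_cut:
  assumes "first_cut \<le> k"
  shows "cut_pos (last_cut k)" "last_cut k \<le> k" "cut_pos c \<Longrightarrow> c \<le> k \<Longrightarrow> c \<le> last_cut k"
proof -
  have "cut_pos (last_cut k) \<and> last_cut k \<le> k"
    unfolding last_cut_def
    by (rule GreatestI_nat[where k = first_cut and b = k]) (use first_cut(1) assms in auto)
  then show "cut_pos (last_cut k)" "last_cut k \<le> k"
    by auto
  show "c \<le> last_cut k" if "cut_pos c" "c \<le> k" for c
    unfolding last_cut_def by (rule Greatest_le_nat[where b = k]) (use that in auto)
qed

lemma last_cut_near:
  assumes "first_cut \<le> k" and "k < length w"
  shows "k < last_cut k + gap"
proof (rule ccontr)
  assume far: "\<not> k < last_cut k + gap"
  have "gap \<le> last_cut k"
    using last_cut(1)[OF assms(1)] by (simp add: cut_pos_iff)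
  then obtain b where "last_cut k < b" "b \<le> last_cut k + gap" "cut_pos b"
    using cut_pos_within_gap[of "last_cut k"] far assms(2) by auto
  then show False
    using last_cut(3)[OF assms(1), of b] far by auto
qed

definition anchor_pos :: "nat \<Rightarrow> nat" where
  "anchor_pos k = (if k < first_cut then first_cut else last_cut k)"

lemma cut_pos_anchor_pos: "cut_pos (anchor_pos k)"
  using first_cut(1) last_cut(1) by (simp add: anchor_pos_def)

lemma anchor_pos_Suc:
  "anchor_pos (k + 1) = (if first_cut \<le> k \<and> cut_pos (k + 1) then k + 1 else anchor_pos k)"
proof (cases "first_cut \<le> k")
  case True
  then have "last_cut (k + 1) = (if cut_pos (k + 1) then k + 1 else last_cut k)"
    using last_cut[of k] last_cut[of "k + 1"] by (auto intro: antisym simp: le_Suc_eq)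
  then show ?thesis
    using True by (simp add: anchor_pos_def)
next
  case False
  then have "k + 1 < first_cut \<or> k + 1 = first_cut"
    by auto
  then have "anchor_pos (k + 1) = first_cut"
    using last_cut[of first_cut] first_cut(1) by (auto intro: antisym simp: anchor_pos_def)
  then show ?thesis
    using False by (simp add: anchor_pos_def)
qed

lemma anchor_nth_opt_late:
  assumes "first_cut \<le> k" and "k < length w"
  shows "has_cut_before (nth_opt w) (int k) \<and> anchor (nth_opt w) (int k) = int (last_cut k)"
proof -
  let ?P = "\<lambda>j. is_cut (nth_opt w) (int k - int j)"
  have P: "?P j \<longleftrightarrow> j \<le> k \<and> cut_pos (k - j)" for j
    by (auto simp: is_cut_nth_opt of_nat_diff[symmetric] simp del: of_nat_diff)
  have near: "k - last_cut k < reach"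
    using last_cut_near[OF assms] last_cut(2)[OF assms(1)] by (simp add: less_diff_conv2 reach_def)
  have "?P (k - last_cut k)"
    unfolding P using last_cut[OF assms(1)] by simp
  moreover have "\<not> ?P j" if "j < k - last_cut k" for j
    using P last_cut(3)[OF assms(1), of "k - j"] that by auto
  ultimately have "first_within reach ?P = k - last_cut k"
    using near by (intro first_within_eqI)
  then show ?thesis
    using near \<open>?P (k - last_cut k)\<close> last_cut(2)[OF assms(1)]
    by (auto simp: has_cut_before_def anchor_def)
qed

lemma anchor_nth_opt_early:
  assumes "k < first_cut"
  shows "\<not> has_cut_before (nth_opt w) (int k) \<and> anchor (nth_opt w) (int k) = int first_cut"
proof -
  have "\<not> is_cut (nth_opt w) (int k - int j)" for j
    using first_cut(3)[of "nat (int k - int j)"] assms by (auto simp: is_cut_nth_opt)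
  then have none: "\<not> has_cut_before (nth_opt w) (int k)"
    by (simp add: has_cut_before_def)
  let ?P = "\<lambda>j. is_cut (nth_opt w) (int k + 1 + int j)"
  have P: "?P j \<longleftrightarrow> cut_pos (k + 1 + j)" for j
  proof -
    have "int k + 1 + int j = int (k + 1 + j)"
      by simp
    then show ?thesis
      unfolding is_cut_nth_opt by (simp only: nat_int of_nat_0_le_iff simp_thms)
  qed
  have "first_within reach ?P = first_cut - k - 1"
  proof (rule first_within_eqI)
    show "first_cut - k - 1 < reach"
      using first_cut(2) assms by simp
    show "?P (first_cut - k - 1)"
      unfolding P using first_cut(1) assms by simp
    show "\<not> ?P j" if "j < first_cut - k - 1" for j
      unfolding P using first_cut(3) that by simp
  qed
  then show ?thesis
    using none assms by (simp add: anchor_def)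
qed

lemma two_le_length: "2 \<le> length w"
  using long gap_pos by (simp add: reach_def)

lemma first_cut_pos: "0 < first_cut"
  using first_cut(1) gap_pos by (auto simp: cut_pos_iff)

lemma link_nth_opt: "k < length w \<Longrightarrow> link (nth_opt w) (int k) = idem_at (anchor_pos k)"
  using anchor_nth_opt_early[of k] anchor_nth_opt_late[of k]
  by (cases "k < first_cut") (simp_all add: link_def idem_at_def anchor_pos_def)

lemma middle_nth_opt:
  assumes "k < length w"
  shows "middle (nth_opt w) (int k) =
    (if k = 0 then infix_value 0 first_cut
     else if first_cut \<le> k \<and> (cut_pos (k + 1) \<or> k + 1 = length w)
     then infix_value (anchor_pos k) (k + 1)
     else idem_at (anchor_pos k))"
proof (cases "k < first_cut")
  case True
  then show ?thesis
    using anchor_nth_opt_early[OF True] link_nth_opt[OF assms] assms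
    by (auto simp: middle_def nth_opt_def anchor_pos_def)
next
  case False
  have "0 < k"
    using False first_cut_pos by simp
  moreover have "is_cut (nth_opt w) (int k + 1) = cut_pos (k + 1)"
    by (simp add: cut_pos_def add.commute)
  moreover have "nth_opt w (int k + 1) = None \<longleftrightarrow> k + 1 = length w"
    using assms by (auto simp: nth_opt_def)
  ultimately show ?thesis
    using False anchor_nth_opt_late[OF _ assms] link_nth_opt[OF assms]
    by (simp add: middle_def anchor_pos_def add.commute)
qed

lemma letter_at_nth_opt:
  assumes "k < length w"
  shows "letter_at (nth_opt w) (int k) =
    (if k = 0 then None else Some (idem_at (anchor_pos k)), middle (nth_opt w) (int k),
     if k + 1 < length w then Some (idem_at (anchor_pos (k + 1))) else None)"
  using assms link_nth_opt[OF assms] link_nth_opt[of "k + 1"]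
  by (auto simp: letter_at_def nth_opt_def add.commute)

lemma beta_letter_first: "beta_letter (letter_at (nth_opt w) 0) = infix_value 0 (anchor_pos 1)"
proof -
  have "0 < length w" "1 < length w"
    using two_le_length by linarith+
  moreover have "anchor_pos 1 = first_cut"
    using anchor_pos_Suc[of 0] first_cut_pos by (simp add: anchor_pos_def)
  ultimately show ?thesis
    using letter_at_nth_opt[of 0] middle_nth_opt[of 0] cut_pos_idem_at(2)[OF first_cut(1)] by simp
qed

lemma beta_letter_before_boundary:
  assumes "k < length w" and "first_cut \<le> k" and "cut_pos (k + 1) \<or> k + 1 = length w"
  shows "infix_value 0 (anchor_pos k) * beta_letter (letter_at (nth_opt w) (int k)) =
    (if k + 1 < length w then infix_value 0 (anchor_pos (k + 1)) else \<alpha> w)"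
proof -
  define c where "c = anchor_pos k"
  have "infix_value 0 c * idem_at c = infix_value 0 c"
    using cut_pos_idem_at(2)[OF cut_pos_anchor_pos] by (simp add: c_def)
  moreover have "infix_value 0 (k + 1) = infix_value 0 c * infix_value c (k + 1)"
    using last_cut(2)[OF assms(2)] assms(2)
    by (intro factor_value_split) (auto simp: c_def anchor_pos_def)
  ultimately have prefix:
    "infix_value 0 c * (idem_at c * infix_value c (k + 1)) = infix_value 0 (k + 1)"
    by (simp add: mult.assoc[symmetric])
  have letter: "letter_at (nth_opt w) (int k) = (Some (idem_at c), infix_value c (k + 1),
      if k + 1 < length w then Some (idem_at (anchor_pos (k + 1))) else None)"
    using assms first_cut_pos letter_at_nth_opt[OF assms(1)] middle_nth_opt[OF assms(1)]
    by (simp add: c_def)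
  show ?thesis
  proof (cases "k + 1 < length w")
    case True
    with assms have "cut_pos (k + 1)" "anchor_pos (k + 1) = k + 1"
      using anchor_pos_Suc[of k] by auto
    then show ?thesis
      using True letter prefix cut_pos_idem_at(2)[of "k + 1"]
      by (simp add: c_def mult.assoc[symmetric])
  next
    case False
    then have "k + 1 = length w"
      using assms(1) by simp
    then have "infix_value 0 (k + 1) = \<alpha> w"
      using infix_value_all by simp
    then show ?thesis
      using False letter prefix by (simp add: c_def)
  qed
qed

lemma beta_letter_between_cuts:
  assumes "1 \<le> k" and "k < length w" and "\<not> (first_cut \<le> k \<and> (cut_pos (k + 1) \<or> k + 1 = length w))"
  shows "k + 1 < length w"
    and "infix_value 0 (anchor_pos k) * beta_letter (letter_at (nth_opt w) (int k)) =
      infix_value 0 (anchor_pos (k + 1))"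
proof -
  show "k + 1 < length w"
    using assms(2,3) first_cut(1) by (auto simp: cut_pos_iff)
  moreover have no_cut: "\<not> (first_cut \<le> k \<and> cut_pos (k + 1))"
    using assms(3) by auto
  ultimately have "anchor_pos (k + 1) = anchor_pos k"
    "letter_at (nth_opt w) (int k) =
      (Some (idem_at (anchor_pos k)), idem_at (anchor_pos k), Some (idem_at (anchor_pos k)))"
    using assms letter_at_nth_opt[OF assms(2)] middle_nth_opt[OF assms(2)] anchor_pos_Suc[of k]
    by (cases "first_cut \<le> k"; simp)+
  moreover have "e * e = e" "infix_value 0 (anchor_pos k) * e = infix_value 0 (anchor_pos k)"
    if "e = idem_at (anchor_pos k)" for e
    using that cut_pos_idem_at[OF cut_pos_anchor_pos] idems_idem by simp_all
  ultimately show "infix_value 0 (anchor_pos k) * beta_letter (letter_at (nth_opt w) (int k)) =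
      infix_value 0 (anchor_pos (k + 1))"
    by (simp add: mult.assoc[symmetric])
qed

lemma beta_letter_step:
  assumes "1 \<le> k" and "k < length w"
  shows "infix_value 0 (anchor_pos k) * beta_letter (letter_at (nth_opt w) (int k)) =
    (if k + 1 < length w then infix_value 0 (anchor_pos (k + 1)) else \<alpha> w)"
proof (cases "first_cut \<le> k \<and> (cut_pos (k + 1) \<or> k + 1 = length w)")
  case True
  then show ?thesis
    using beta_letter_before_boundary[OF assms(2)] by blast
next
  case False
  then show ?thesis
    using beta_letter_between_cuts[OF assms False] by simp
qed

lemma prefix_product_letters:
  assumes "1 \<le> k" and "k \<le> length w"
  shows "prod_list (map (\<lambda>i. beta_letter (letter_at (nth_opt w) (int i))) [0..<k]) =
    (if k < length w then infix_value 0 (anchor_pos k) else \<alpha> w)"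
  using assms
proof (induction k)
  case (Suc k)
  show ?case
  proof (cases "k = 0")
    case True
    then show ?thesis
      using Suc.prems beta_letter_first two_le_length by simp
  next
    case False
    then show ?thesis
      using Suc beta_letter_step[of k] by simp
  qed
qed simp

lemma letters_in_Bset: "map (\<lambda>i. letter_at (nth_opt w) (int i)) [0..<length w] \<in> lists (Bset \<alpha>)"
  using cut_pos_idem_at(1)[OF cut_pos_anchor_pos]
  by (auto simp: Bset_def idems_def letter_at_nth_opt split: if_splits)

lemma letters_well_formed: "well_formed \<alpha> (map (\<lambda>i. letter_at (nth_opt w) (int i)) [0..<length w])"
proof -
  have "0 < length w" "length w - 1 < length w"
    using two_le_length by linarith+
  then show ?thesis
    using cut_pos_idem_at(1)[OF cut_pos_anchor_pos]
    using letter_at_nth_opt[of 0]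
    by (auto simp: well_formed_def idems_def letter_at_nth_opt)
qed

lemma beta_letters: "beta (map (\<lambda>i. letter_at (nth_opt w) (int i)) [0..<length w]) = \<alpha> w"
  using prefix_product_letters[of "length w"] two_le_length by (simp add: beta_def o_def)

end

end

definition eta :: "'a list \<Rightarrow> 'm bletter list" where
  "eta w = (if length w < reach then [(None, \<alpha> w, None)]
            else map (\<lambda>i. letter_at (nth_opt w) (int i)) [0..<length w])"

lemma eta_properties: "eta w \<in> lists (Bset \<alpha>) \<and> well_formed \<alpha> (eta w) \<and> \<alpha> w = beta (eta w)"
proof (cases "length w < reach")
  case True
  then show ?thesis
    by (simp add: eta_def Bset_def well_formed_def beta_def)
next
  case False
  then show ?thesis
    using letters_in_Bset letters_well_formed beta_letters by (simp add: eta_def)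
qed

lemma local_map_eta: "local_map reach radius eta"
  unfolding local_map_def
proof (intro conjI allI impI)
  fix w w' :: "'a list" and i i'
  assume "reach \<le> length w" "reach \<le> length w'" "i < length w" "i' < length w'"
    and "neighbourhood radius w i = neighbourhood radius w' i'"
  then show "eta w ! i = eta w' ! i'"
    by (auto simp: eta_def intro!: letter_at_local dest: nth_opt_eq_if_neighbourhood_eq)
qed (simp add: eta_def)

end

theorem lemma3:
  fixes \<alpha> :: "'a::finite list \<Rightarrow> 'm::{monoid_mult, finite}"
  assumes "monoid_morphism \<alpha>"
  shows "\<exists>\<eta> :: 'a list \<Rightarrow> 'm bletter list.
           (\<forall>w. \<eta> w \<in> lists (Bset \<alpha>) \<and> well_formed \<alpha> (\<eta> w) \<and> \<alpha> w = beta (\<eta> w))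
         \<and> (\<forall>K. K \<subseteq> lists (Bset \<alpha>) \<and> FO2_lt_definable (Bset \<alpha>) K
                \<longrightarrow> FO2_lt_succ_definable (UNIV :: 'a set) {w. \<eta> w \<in> K})"
proof -
  interpret morphism_to_finite_monoid \<alpha>
    by unfold_locales (rule assms)
  have "FO2_lt_succ_definable UNIV {w. eta w \<in> K}" if "FO2_lt_definable (Bset \<alpha>) K" for K
  proof (rule FO2_lt_succ_definable_preimage_local_map[OF local_map_eta])
    show "eta w \<in> lists (Bset \<alpha>)" for w
      using eta_properties by blast
    show "FO2_lt_succ_definable (Bset \<alpha>) K"
      using that by (auto simp: FO2_lt_definable_def FO2_lt_succ_definable_def)
  qed
  then show ?thesis
    using eta_properties by blast
qed

end
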